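(* Let $N\ge3$. For any $V\in\mathcal{V}$ there exist $\tilde V\in\mathcal{V}$ and $\tilde W\in L^{N/2}(\mathbb{R}^N)\cap L^\infty(\mathbb{R}^N)$ such that $\mu(\tilde V)>0$ and $V=\tilde V+\tilde W$.
   Context: $\mathcal{D}^{1,2}(\mathbb{R}^N)$ is the completion of $C_c^\infty(\mathbb{R}^N)$ for the norm $(\int|\nabla u|^2)^{1/2}$. The class $\mathcal{V}$ consists of all functions $V(x)=\sum_{i=1}^k\frac{\lambda_i\chi_{B(a_i,r_i)}(x)}{|x-a_i|^2}+\frac{\lambda_\infty\chi_{\mathbb{R}^N\setminus B(0,R)}(x)}{|x|^2}+W(x)$ with $k\in\mathbb{N}$, $r_i,R>0$, $a_i$ pairwise distinct, $\lambda_i,\lambda_\infty<\frac{(N-2)^2}{4}$, $W\in L^{N/2}(\mathbb{R}^N)\cap L^\infty(\mathbb{R}^N)$. $\mu(V)=\inf_{u\in\mathcal{D}^{1,2}(\mathbb{R}^N)\setminus\{0\}}\frac{\int(|\nabla u|^2-Vu^2)}{\int|\nabla u|^2}$. *)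

theory Defs
  imports "HOL-Analysis.Analysis"
begin

text \<open>Functions on R^N are modelled as functions on the type real^'n, N = CARD('n).\<close>

definition partial_deriv :: "'n::finite \<Rightarrow> (real^'n \<Rightarrow> real) \<Rightarrow> real^'n \<Rightarrow> real" where
  "partial_deriv i u x = frechet_derivative u (at x) (axis i 1)"

definition grad :: "(real^'n::finite \<Rightarrow> real) \<Rightarrow> real^'n \<Rightarrow> real^'n" where
  "grad u x = (\<chi> i. partial_deriv i u x)"

fun Ck :: "nat \<Rightarrow> (real^'n::finite \<Rightarrow> real) \<Rightarrow> bool" where
  "Ck 0 u = continuous_on UNIV u"
| "Ck (Suc k) u = (u differentiable_on UNIV \<and> (\<forall>i. Ck k (partial_deriv i u)))"

definition smooth_compact_support :: "(real^'n::finite \<Rightarrow> real) \<Rightarrow> bool" where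
  "smooth_compact_support u \<longleftrightarrow> (\<forall>k. Ck k u) \<and> compact (closure {x. u x \<noteq> 0})"

definition LN2_Linf :: "(real^'n::finite \<Rightarrow> real) \<Rightarrow> bool" where
  "LN2_Linf W \<longleftrightarrow> W \<in> borel_measurable lebesgue
     \<and> integrable lebesgue (\<lambda>x. \<bar>W x\<bar> powr (real CARD('n) / 2))
     \<and> (\<exists>C. AE x in lebesgue. \<bar>W x\<bar> \<le> C)"

definition potential_class :: "(real^'n::finite \<Rightarrow> real) set" where
  "potential_class = {V. \<exists>(k::nat) (lam::nat \<Rightarrow> real) (a::nat \<Rightarrow> real^'n) (r::nat \<Rightarrow> real)
        (lam_inf::real) (R::real) (W::real^'n \<Rightarrow> real).
      (\<forall>i<k. r i > 0) \<and> R > 0 \<and> inj_on a {..<k}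
      \<and> (\<forall>i<k. lam i < (real CARD('n) - 2)^2 / 4) \<and> lam_inf < (real CARD('n) - 2)^2 / 4
      \<and> LN2_Linf W
      \<and> (\<forall>x. V x = (\<Sum>i<k. lam i * indicator (ball (a i) (r i)) x / (norm (x - a i))^2)
                  + lam_inf * indicator (UNIV - ball 0 R) x / (norm x)^2 + W x)}"

text \<open>\<mu>(V), as an extended real (the infimum is taken over the dense subspace
  C_c^\<infinity>(R^N) of D^{1,2}(R^N)).\<close>
definition mu :: "(real^'n::finite \<Rightarrow> real) \<Rightarrow> ereal" where
  "mu V = (INF u \<in> {u. smooth_compact_support u \<and> u \<noteq> (\<lambda>x. 0)}.
      ereal (((LINT x|lebesgue. (norm (grad u x))^2) - (LINT x|lebesgue. V x * (u x)^2))
             / (LINT x|lebesgue. (norm (grad u x))^2)))"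

end

theory Submission
  imports Defs "HOL-Real_Asymp.Real_Asymp"
begin

text \<open>Let \<open>p = (N - 2)/4\<close> and let \<open>C = {0} \<union> {a\<^sub>i}\<close> be the poles of \<open>V\<close>. The ground state
  \<open>\<Phi>(x) = (\<Sum>c\<in>C. \<bar>x - c\<bar> powr (-2p))\<close> yields the multipolar Hardy inequality
  \<open>\<integral>\<bar>\<nabla>u\<bar>\<^sup>2 \<ge> (N - 2)\<^sup>2/4 \<integral> G u\<^sup>2\<close> with \<open>G(x) = (\<Sum>c\<in>C. \<bar>x - c\<bar> powr (-2p-2)) / \<Phi>(x)\<close>
  (proved for the regularisation \<open>\<bar>x - c\<bar>\<^sup>2 + \<epsilon>\<close> and then by Fatou as \<open>\<epsilon> \<rightarrow> 0\<close>).
  For any \<open>\<kappa> < 1\<close>, \<open>G\<close> is at least \<open>\<kappa> / \<bar>x - c\<bar>\<^sup>2\<close> close to each pole \<open>c\<close> and at least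
  \<open>\<kappa> / \<bar>x\<bar>\<^sup>2\<close> far out. Since all coupling constants of \<open>V\<close> are below \<open>(N - 2)\<^sup>2/4\<close>,
  shrinking the balls around the poles and enlarging the exterior region yields a singular
  potential \<open>Vt \<le> \<theta> (N - 2)\<^sup>2/4 G\<close> with \<open>\<theta> < 1\<close>, hence \<open>\<mu>(Vt) \<ge> 1 - \<theta>\<close>; the part of \<open>V\<close>
  that is cut away is bounded with compact support and is absorbed into \<open>Wt\<close>.\<close>

section \<open>Integrals over \<open>\<real>\<^sup>N\<close>\<close>

lemma lebesgue_integral_translate:
  fixes f :: "'a::euclidean_space \<Rightarrow> real"
  assumes f: "f \<in> borel_measurable lebesgue"
  shows "(LINT x|lebesgue. f (t + x)) = (LINT x|lebesgue. f x)"
    and "integrable lebesgue (\<lambda>x. f (t + x)) \<longleftrightarrow> integrable lebesgue f"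
proof -
  have e: "(\<lambda>x. t + (\<Sum>j\<in>Basis. (1 * (x \<bullet> j)) *\<^sub>R j)) = (\<lambda>x::'a. t + x)"
    by (simp add: euclidean_representation)
  have distr: "distr lebesgue lebesgue (\<lambda>x. t + x) = lebesgue"
    using lebesgue_affine_euclidean[of "\<lambda>_. 1" t] e by (simp add: density_1)
  have meas: "(\<lambda>x. t + x) \<in> lebesgue \<rightarrow>\<^sub>M lebesgue"
    using lebesgue_affine_measurable[of "\<lambda>_. 1" t] e by simp
  show "(LINT x|lebesgue. f (t + x)) = (LINT x|lebesgue. f x)"
    using integral_distr[OF meas f] distr by simp
  show "integrable lebesgue (\<lambda>x. f (t + x)) \<longleftrightarrow> integrable lebesgue f"
    using integrable_distr_eq[OF meas f] distr by simp
qed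

lemma integrable_continuous_compact_support:
  fixes g :: "'a::euclidean_space \<Rightarrow> real"
  assumes "continuous_on UNIV g" "compact K" "\<And>x. x \<notin> K \<Longrightarrow> g x = 0"
  shows "integrable lebesgue g"
proof -
  have "integrable lborel (\<lambda>x. indicator K x *\<^sub>R g x)"
    by (rule borel_integrable_compact[OF assms(2)]) (rule continuous_on_subset[OF assms(1)], auto)
  moreover have "(\<lambda>x. indicator K x *\<^sub>R g x) = g"
    using assms(3) by (auto simp: indicator_def of_bool_def)
  moreover have "g \<in> borel_measurable borel"
    using assms(1) by (simp add: borel_measurable_continuous_onI)
  ultimately show ?thesis
    by (simp add: integrable_completion)
qed

lemma continuous_compact_support_bounded:
  fixes g :: "'a::euclidean_space \<Rightarrow> real"
  assumes "continuous_on UNIV g" "compact K" "\<And>x. x \<notin> K \<Longrightarrow> g x = 0"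
  obtains B where "\<And>x. \<bar>g x\<bar> \<le> B"
proof -
  have "compact (g ` K)"
    by (rule compact_continuous_image[OF continuous_on_subset[OF assms(1)] assms(2)]) auto
  then obtain B where B: "\<And>y. y \<in> g ` K \<Longrightarrow> norm y \<le> B"
    using compact_imp_bounded bounded_iff by metis
  show ?thesis
  proof (rule that[of "max B 0"])
    show "\<bar>g x\<bar> \<le> max B 0" for x
      using B[of "g x"] assms(3)[of x] by (cases "x \<in> K") auto
  qed
qed

lemma integral_difference_quotient_eq_0:
  fixes h :: "'a::euclidean_space \<Rightarrow> real"
  assumes "h \<in> borel_measurable lebesgue" "integrable lebesgue h"
  shows "(LINT x|lebesgue. (h (x + t *\<^sub>R e) - h x) / t) = 0"
proof -
  have "integrable lebesgue (\<lambda>x. h (t *\<^sub>R e + x))"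
    using lebesgue_integral_translate(2)[OF assms(1)] assms(2) by simp
  then have "(LINT x|lebesgue. (h (x + t *\<^sub>R e) - h x) / t)
      = ((LINT x|lebesgue. h (t *\<^sub>R e + x)) - (LINT x|lebesgue. h x)) / t"
    using assms(2) by (simp add: add.commute)
  also have "\<dots> = 0"
    using lebesgue_integral_translate(1)[OF assms(1)] by simp
  finally show ?thesis .
qed

lemma difference_quotient_bound:
  fixes h h' :: "'a::real_normed_vector \<Rightarrow> real"
  assumes d: "\<And>y. ((\<lambda>s. h (y + s *\<^sub>R e)) has_real_derivative h' y) (at 0)"
    and B: "\<And>y. \<bar>h' y\<bar> \<le> B" and M: "\<And>y. M < norm y \<Longrightarrow> h y = 0" and t: "0 < t" "t \<le> 1"
  shows "\<bar>(h (x + t *\<^sub>R e) - h x) / t\<bar> \<le> B * indicator (cball 0 (M + norm e)) x"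
proof (cases "x \<in> cball 0 (M + norm e)")
  case True
  have "((\<lambda>s. h (x + s *\<^sub>R e)) has_real_derivative h' (x + s *\<^sub>R e)) (at s)" for s
  proof -
    have "((\<lambda>r. h (x + (r + s) *\<^sub>R e)) has_real_derivative h' (x + s *\<^sub>R e)) (at 0)"
      using d[of "x + s *\<^sub>R e"] by (simp add: algebra_simps)
    then show ?thesis
      using DERIV_shift[of "\<lambda>r. h (x + r *\<^sub>R e)" "h' (x + s *\<^sub>R e)" 0 s] by simp
  qed
  then obtain z where "h (x + t *\<^sub>R e) - h (x + 0 *\<^sub>R e) = (t - 0) * h' (x + z *\<^sub>R e)"
    using MVT2[OF t(1), where f="\<lambda>s. h (x + s *\<^sub>R e)" and f'="\<lambda>s. h' (x + s *\<^sub>R e)"] by blast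
  then show ?thesis
    using True t B[of "x + z *\<^sub>R e"] by simp
next
  case False
  then have "norm x > M + norm e"
    by simp
  moreover have "norm (t *\<^sub>R e) \<le> norm e"
    using t by (simp add: mult_left_le_one_le)
  ultimately have "M < norm x" "M < norm (x + t *\<^sub>R e)"
    using norm_diff_ineq[of x "t *\<^sub>R e"] norm_ge_zero[of e] by linarith+
  then show ?thesis
    using False M by simp
qed

lemma integral_line_derivative_eq_0:
  fixes h h' :: "'a::euclidean_space \<Rightarrow> real"
  assumes h: "continuous_on UNIV h" and h': "continuous_on UNIV h'" and K: "compact K"
    and hK: "\<And>x. x \<notin> K \<Longrightarrow> h x = 0" and h'K: "\<And>x. x \<notin> K \<Longrightarrow> h' x = 0"
    and d: "\<And>x. ((\<lambda>s. h (x + s *\<^sub>R e)) has_real_derivative h' x) (at 0)"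
  shows "(LINT x|lebesgue. h' x) = 0"
proof -
  obtain B where B: "\<And>x. \<bar>h' x\<bar> \<le> B"
    using continuous_compact_support_bounded[OF h' K h'K] by blast
  obtain M where "\<And>x. x \<in> K \<Longrightarrow> norm x \<le> M"
    using compact_imp_bounded[OF K] unfolding bounded_iff by blast
  then have M: "\<And>x. M < norm x \<Longrightarrow> h x = 0"
    using hK by force
  define S where "S = cball (0::'a) (M + norm e)"
  define t where "t n = 1 / real (Suc n)" for n
  have t: "0 < t n" "t n \<le> 1" for n
    by (auto simp: t_def)
  define q where "q n x = (h (x + t n *\<^sub>R e) - h x) / t n" for n x
  have meas: "f \<in> borel_measurable lebesgue" if "continuous_on UNIV f" for f :: "'a \<Rightarrow> real"
    using that by (simp add: borel_measurable_continuous_onI measurable_completion)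
  have "(\<lambda>n. LINT x|lebesgue. q n x) \<longlonglongrightarrow> (LINT x|lebesgue. h' x)"
  proof (rule integral_dominated_convergence[where w="\<lambda>x. B * indicator S x"])
    show "h' \<in> borel_measurable lebesgue"
      by (rule meas[OF h'])
    show "q n \<in> borel_measurable lebesgue" for n
      unfolding q_def
      by (intro meas continuous_intros continuous_on_compose2[OF h]) (use t(1)[of n] in auto)
    have "emeasure lebesgue S < \<infinity>"
      unfolding S_def using emeasure_bounded_finite[of "cball (0::'a) (M + norm e)"] by simp
    then show "integrable lebesgue (\<lambda>x. B * indicator S x)"
      by (intro integrable_mult_right integrable_real_indicator) (auto simp: S_def)
    show "AE x in lebesgue. (\<lambda>n. q n x) \<longlonglongrightarrow> h' x"
    proof (rule AE_I2)
      fix x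
      have "t \<longlonglongrightarrow> 0"
        unfolding t_def by (rule LIMSEQ_Suc[OF lim_const_over_n])
      then have "filterlim t (at 0) sequentially"
        using t(1) by (simp add: filterlim_at less_imp_neq[symmetric])
      moreover have "((\<lambda>s. (h (x + s *\<^sub>R e) - h x) / s) \<longlongrightarrow> h' x) (at 0)"
        using d[of x] unfolding DERIV_def by simp
      ultimately show "(\<lambda>n. q n x) \<longlonglongrightarrow> h' x"
        unfolding q_def by (rule filterlim_compose[rotated])
    qed
    show "AE x in lebesgue. norm (q n x) \<le> B * indicator S x" for n
      unfolding q_def S_def using difference_quotient_bound[OF d B M t] by simp
  qed
  moreover have "(LINT x|lebesgue. q n x) = 0" for n
    unfolding q_def
    by (rule integral_difference_quotient_eq_0[OF meas[OF h] integrable_continuous_compact_support[OF h K hK]])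
  ultimately show ?thesis
    using LIMSEQ_unique by (simp add: LIMSEQ_const_iff)
qed

lemma integral_pos_continuous:
  fixes g :: "'a::euclidean_space \<Rightarrow> real"
  assumes g: "continuous_on UNIV g" "integrable lebesgue g" "\<And>x. g x \<ge> 0" and x0: "g x0 > 0"
  shows "(LINT x|lebesgue. g x) > 0"
proof -
  obtain r where r: "r > 0" "\<And>y. dist y x0 < r \<Longrightarrow> dist (g y) (g x0) < g x0 / 2"
    using g(1) x0 unfolding continuous_on_iff by (metis UNIV_I half_gt_zero)
  have below: "g x0 / 2 * indicator (ball x0 r) y \<le> g y" for y
  proof (cases "y \<in> ball x0 r")
    case True
    then have "dist (g y) (g x0) < g x0 / 2"
      using r(2)[of y] by (simp add: dist_commute)
    then have "g x0 / 2 < g y"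
      by (simp only: dist_real_def abs_less_iff) linarith
    then show ?thesis
      using True by simp
  qed (simp add: g(3))
  have "integrable lebesgue (\<lambda>y. g x0 / 2 * indicator (ball x0 r) y :: real)"
    using emeasure_lborel_ball_finite[of x0 r]
    by (intro integrable_mult_right integrable_real_indicator) auto
  then have "(LINT y|lebesgue. g x0 / 2 * indicator (ball x0 r) y) \<le> (LINT y|lebesgue. g y)"
    using g(2) below by (intro integral_mono) auto
  moreover have "0 < g x0 / 2 * measure lborel (ball x0 r)"
    using x0 content_ball_pos[OF r(1)] by simp
  ultimately show ?thesis
    by simp
qed

lemma integral_le_enn2real_nn_integral:
  fixes f :: "'a \<Rightarrow> real"
  shows "integral\<^sup>L M f \<le> enn2real (\<integral>\<^sup>+x. ennreal (f x) \<partial>M)"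
proof (cases "integrable M f")
  case True
  then have int: "integrable M (\<lambda>x. max (f x) 0)"
    by (intro integrable_max) auto
  then have "integral\<^sup>L M f \<le> integral\<^sup>L M (\<lambda>x. max (f x) 0)"
    using True by (intro integral_mono) auto
  also have "\<dots> = enn2real (\<integral>\<^sup>+x. ennreal (max (f x) 0) \<partial>M)"
    using nn_integral_eq_integral[OF int] by (simp add: integral_nonneg_AE)
  also have "(\<integral>\<^sup>+x. ennreal (max (f x) 0) \<partial>M) = (\<integral>\<^sup>+x. ennreal (f x) \<partial>M)"
    by (intro nn_integral_cong) (auto simp: max_def ennreal_neg)
  finally show ?thesis .
qed (simp add: not_integrable_integral_eq)

section \<open>The multipolar Hardy inequality\<close>

lemma smooth_compact_supportD:
  fixes u :: "real^'n::finite \<Rightarrow> real"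
  assumes "smooth_compact_support u"
  shows "continuous_on UNIV u" "\<And>x. u differentiable (at x)"
    "\<And>i. continuous_on UNIV (partial_deriv i u)"
proof -
  have "Ck k u" for k
    using assms unfolding smooth_compact_support_def by blast
  from this[of 0] this[of 1] show "continuous_on UNIV u" "\<And>x. u differentiable (at x)"
    "\<And>i. continuous_on UNIV (partial_deriv i u)"
    by (simp_all add: differentiable_on_def)
qed

lemma smooth_compact_supportE:
  fixes u :: "real^'n::finite \<Rightarrow> real"
  assumes "smooth_compact_support u"
  obtains S where "compact S" "\<And>x. x \<notin> S \<Longrightarrow> u x = 0" "\<And>x i. x \<notin> S \<Longrightarrow> partial_deriv i u x = 0"
proof
  let ?S = "closure {x. u x \<noteq> 0}"
  show "compact ?S"
    using assms unfolding smooth_compact_support_def by blast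
  show u0: "u y = 0" if "y \<notin> ?S" for y
    using that closure_subset[of "{x. u x \<noteq> 0}"] by auto
  fix x i
  assume x: "x \<notin> ?S"
  have "((\<lambda>_. 0) has_derivative (\<lambda>_. 0)) (at x)"
    by simp
  then have "(u has_derivative (\<lambda>_. 0)) (at x)"
  proof (rule has_derivative_transform_within_open)
    show "open (- ?S)" "x \<in> - ?S"
      using x by auto
    show "\<And>y. y \<in> - ?S \<Longrightarrow> 0 = u y"
      using u0 by (metis ComplD)
  qed
  then show "partial_deriv i u x = 0"
    unfolding partial_deriv_def by (simp add: frechet_derivative_at[symmetric])
qed

lemma partial_deriv_has_real_derivative:
  fixes u :: "real^'n::finite \<Rightarrow> real"
  assumes "u differentiable (at x)"
  shows "((\<lambda>t. u (x + t *\<^sub>R axis j 1)) has_real_derivative partial_deriv j u x) (at 0)"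
proof -
  let ?D = "frechet_derivative u (at x)"
  have "(u has_derivative ?D) (at x)"
    using assms frechet_derivative_works by blast
  then have D: "(u has_derivative ?D) (at (x + 0 *\<^sub>R axis j 1))"
    by simp
  have "((\<lambda>t::real. x + t *\<^sub>R axis j 1) has_derivative (\<lambda>t. t *\<^sub>R axis j 1)) (at 0)"
    by (auto intro!: derivative_eq_intros)
  from has_derivative_compose[OF this D]
  have "((\<lambda>t. u (x + t *\<^sub>R axis j 1)) has_derivative (\<lambda>t. ?D (t *\<^sub>R axis j 1))) (at 0)" .
  moreover have "?D (t *\<^sub>R axis j 1) = partial_deriv j u x * t" for t
    using linear_scale[OF has_derivative_linear[OF D]] unfolding partial_deriv_def by simp
  ultimately show ?thesis
    unfolding has_field_derivative_def by simp
qed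

lemma norm_vec_sq: "(norm (v::real^'n::finite))^2 = (\<Sum>j\<in>UNIV. (v$j)^2)"
  unfolding power2_norm_eq_inner inner_vec_def by (simp add: power2_eq_square)

lemma norm_grad_sq: "(norm (grad u x))^2 = (\<Sum>j\<in>UNIV. (partial_deriv j u x)^2)"
  unfolding norm_vec_sq grad_def by simp

text \<open>The multipolar ground state is \<open>\<Phi> = (\<Sum>c\<in>C. (\<bar>x - c\<bar>\<^sup>2 + \<epsilon>) powr -p)\<close>, so that
  \<open>\<partial>\<^sub>j\<Phi> = -2p hardy_P\<close>; \<open>hardy_F j = - \<partial>\<^sub>j\<Phi> / \<Phi>\<close>, and \<open>hardy_dP\<close>, \<open>hardy_dF\<close> are the \<open>j\<close>-th
  partial derivatives of \<open>hardy_P\<close>, \<open>hardy_F\<close>. Expanding \<open>\<Sum>\<^sub>j (\<partial>\<^sub>ju + F\<^sub>j u)\<^sup>2 \<ge> 0\<close> and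
  integrating \<open>\<partial>\<^sub>j(F\<^sub>j u\<^sup>2)\<close> by parts gives \<open>\<integral>\<bar>\<nabla>u\<bar>\<^sup>2 \<ge> \<integral> hardy_K u\<^sup>2\<close> with
  \<open>hardy_K = \<Sum>\<^sub>j (\<partial>\<^sub>jF\<^sub>j - F\<^sub>j\<^sup>2) \<ge> 2p(N - 2p - 2) hardy_G\<close>.\<close>

definition reg_sqdist :: "real \<Rightarrow> real^'n::finite \<Rightarrow> real^'n \<Rightarrow> real" where
  "reg_sqdist \<epsilon> c x = (norm (x - c))^2 + \<epsilon>"

definition hardy_phi :: "real \<Rightarrow> real \<Rightarrow> (real^'n::finite) set \<Rightarrow> real^'n \<Rightarrow> real" where
  "hardy_phi p \<epsilon> C x = (\<Sum>c\<in>C. reg_sqdist \<epsilon> c x powr (-p))"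

definition hardy_P :: "real \<Rightarrow> real \<Rightarrow> (real^'n::finite) set \<Rightarrow> 'n \<Rightarrow> real^'n \<Rightarrow> real" where
  "hardy_P p \<epsilon> C j x = (\<Sum>c\<in>C. reg_sqdist \<epsilon> c x powr (-p-1) * (x$j - c$j))"

definition hardy_dP :: "real \<Rightarrow> real \<Rightarrow> (real^'n::finite) set \<Rightarrow> 'n \<Rightarrow> real^'n \<Rightarrow> real" where
  "hardy_dP p \<epsilon> C j x = (\<Sum>c\<in>C. reg_sqdist \<epsilon> c x powr (-p-1)
      - 2*(p+1) * reg_sqdist \<epsilon> c x powr (-p-2) * (x$j - c$j)^2)"

definition hardy_F :: "real \<Rightarrow> real \<Rightarrow> (real^'n::finite) set \<Rightarrow> 'n \<Rightarrow> real^'n \<Rightarrow> real" where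
  "hardy_F p \<epsilon> C j x = 2*p * hardy_P p \<epsilon> C j x / hardy_phi p \<epsilon> C x"

definition hardy_dF :: "real \<Rightarrow> real \<Rightarrow> (real^'n::finite) set \<Rightarrow> 'n \<Rightarrow> real^'n \<Rightarrow> real" where
  "hardy_dF p \<epsilon> C j x = 2*p * hardy_dP p \<epsilon> C j x / hardy_phi p \<epsilon> C x + (hardy_F p \<epsilon> C j x)^2"

definition hardy_K :: "real \<Rightarrow> real \<Rightarrow> (real^'n::finite) set \<Rightarrow> real^'n \<Rightarrow> real" where
  "hardy_K p \<epsilon> C x = 2*p * (\<Sum>j\<in>UNIV. hardy_dP p \<epsilon> C j x) / hardy_phi p \<epsilon> C x"

definition hardy_G :: "real \<Rightarrow> real \<Rightarrow> (real^'n::finite) set \<Rightarrow> real^'n \<Rightarrow> real" where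
  "hardy_G p \<epsilon> C x = (\<Sum>c\<in>C. reg_sqdist \<epsilon> c x powr (-p-1)) / hardy_phi p \<epsilon> C x"

lemma reg_sqdist_pos: "\<epsilon> > 0 \<Longrightarrow> reg_sqdist \<epsilon> c x > 0"
  unfolding reg_sqdist_def by (simp add: add_nonneg_pos)

lemma reg_sqdist_line:
  "reg_sqdist \<epsilon> c (x + t *\<^sub>R axis j 1) = reg_sqdist \<epsilon> c x + 2*t*(x$j - c$j) + t^2"
proof -
  have "(norm ((x - c) + t *\<^sub>R axis j 1))^2 = (norm (x - c))^2 + 2*t*(x$j - c$j) + t^2"
    unfolding power2_norm_eq_inner
    by (simp add: inner_add_left inner_add_right inner_commute inner_axis algebra_simps power2_eq_square)
  then show ?thesis
    unfolding reg_sqdist_def by (simp add: algebra_simps)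
qed

lemma reg_sqdist_powr_has_real_derivative:
  assumes "\<epsilon> > 0"
  shows "((\<lambda>t. reg_sqdist \<epsilon> c (x + t *\<^sub>R axis j 1) powr q) has_real_derivative
           q * reg_sqdist \<epsilon> c x powr (q-1) * (2*(x$j - c$j))) (at 0)"
proof -
  have "((\<lambda>t. reg_sqdist \<epsilon> c x + 2*t*(x$j - c$j) + t^2) has_real_derivative 2*(x$j - c$j)) (at 0)"
    by (auto intro!: derivative_eq_intros)
  then have "((\<lambda>t. reg_sqdist \<epsilon> c (x + t *\<^sub>R axis j 1)) has_real_derivative 2*(x$j - c$j)) (at 0)"
    by (simp add: reg_sqdist_line)
  moreover have "0 < reg_sqdist \<epsilon> c (x + 0 *\<^sub>R axis j 1)"
    using reg_sqdist_pos[OF assms] by simp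
  ultimately show ?thesis
    using DERIV_chain2[OF has_real_derivative_powr] by fastforce
qed

lemma hardy_phi_pos:
  assumes "\<epsilon> > 0" "finite C" "C \<noteq> {}"
  shows "hardy_phi p \<epsilon> C x > 0"
  unfolding hardy_phi_def
proof (intro sum_pos)
  show "0 < reg_sqdist \<epsilon> c x powr (-p)" for c
    using reg_sqdist_pos[OF assms(1), of c x] by simp
qed (use assms in auto)

lemma hardy_phi_P_has_real_derivative:
  assumes "\<epsilon> > 0"
  shows "((\<lambda>t. hardy_phi p \<epsilon> C (x + t *\<^sub>R axis j 1)) has_real_derivative -2*p * hardy_P p \<epsilon> C j x) (at 0)"
    and "((\<lambda>t. hardy_P p \<epsilon> C j (x + t *\<^sub>R axis j 1)) has_real_derivative hardy_dP p \<epsilon> C j x) (at 0)"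
proof -
  note d = reg_sqdist_powr_has_real_derivative[OF assms(1)]
  have "((\<lambda>t. hardy_phi p \<epsilon> C (x + t *\<^sub>R axis j 1)) has_real_derivative
      (\<Sum>c\<in>C. (-p) * reg_sqdist \<epsilon> c x powr (-p-1) * (2*(x$j - c$j)))) (at 0)"
    unfolding hardy_phi_def by (intro DERIV_sum) (use d[of _ x j "-p"] in auto)
  moreover have "(\<Sum>c\<in>C. (-p) * reg_sqdist \<epsilon> c x powr (-p-1) * (2*(x$j - c$j))) = -2*p * hardy_P p \<epsilon> C j x"
    unfolding hardy_P_def by (simp add: sum_distrib_left algebra_simps)
  ultimately show "((\<lambda>t. hardy_phi p \<epsilon> C (x + t *\<^sub>R axis j 1)) has_real_derivative
      -2*p * hardy_P p \<epsilon> C j x) (at 0)"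
    by simp
  have lin: "((\<lambda>t. (x$j - c$j) + t) has_real_derivative 1) (at 0)" for c
    by (auto intro!: derivative_eq_intros)
  have "((\<lambda>t. \<Sum>c\<in>C. reg_sqdist \<epsilon> c (x + t *\<^sub>R axis j 1) powr (-p-1) * ((x$j - c$j) + t)) has_real_derivative
      (\<Sum>c\<in>C. (-p-1) * reg_sqdist \<epsilon> c x powr (-p-1-1) * (2*(x$j - c$j)) * ((x$j - c$j) + 0)
                + reg_sqdist \<epsilon> c (x + 0 *\<^sub>R axis j 1) powr (-p-1) * 1)) (at 0)"
  proof (rule DERIV_sum)
    fix c
    from DERIV_mult[OF d[of c x j "-p-1"] lin[of c]]
    show "((\<lambda>t. reg_sqdist \<epsilon> c (x + t *\<^sub>R axis j 1) powr (-p-1) * ((x$j - c$j) + t)) has_real_derivative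
      (-p-1) * reg_sqdist \<epsilon> c x powr (-p-1-1) * (2*(x$j - c$j)) * ((x$j - c$j) + 0)
                + reg_sqdist \<epsilon> c (x + 0 *\<^sub>R axis j 1) powr (-p-1) * 1) (at 0)"
      by simp
  qed
  moreover have "(\<Sum>c\<in>C. (-p-1) * reg_sqdist \<epsilon> c x powr (-p-1-1) * (2*(x$j - c$j)) * ((x$j - c$j) + 0)
      + reg_sqdist \<epsilon> c (x + 0 *\<^sub>R axis j 1) powr (-p-1) * 1) = hardy_dP p \<epsilon> C j x"
    unfolding hardy_dP_def by (intro sum.cong refl) (simp add: algebra_simps power2_eq_square)
  ultimately show "((\<lambda>t. hardy_P p \<epsilon> C j (x + t *\<^sub>R axis j 1)) has_real_derivative
      hardy_dP p \<epsilon> C j x) (at 0)"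
    unfolding hardy_P_def by (simp add: algebra_simps)
qed

lemma hardy_F_has_real_derivative:
  assumes "\<epsilon> > 0" "finite C" "C \<noteq> {}"
  shows "((\<lambda>t. hardy_F p \<epsilon> C j (x + t *\<^sub>R axis j 1)) has_real_derivative hardy_dF p \<epsilon> C j x) (at 0)"
proof -
  note dphi = hardy_phi_P_has_real_derivative(1)[OF assms(1)]
  note dP = hardy_phi_P_has_real_derivative(2)[OF assms(1)]
  have phi: "hardy_phi p \<epsilon> C (x + 0 *\<^sub>R axis j 1) \<noteq> 0"
    using hardy_phi_pos[OF assms] by (metis less_irrefl)
  let ?phi0 = "hardy_phi p \<epsilon> C (x + 0 *\<^sub>R axis j 1)"
  have "((\<lambda>t. 2*p * hardy_P p \<epsilon> C j (x + t *\<^sub>R axis j 1) / hardy_phi p \<epsilon> C (x + t *\<^sub>R axis j 1))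
      has_real_derivative (2*p * hardy_dP p \<epsilon> C j x * ?phi0
        - 2*p * hardy_P p \<epsilon> C j (x + 0 *\<^sub>R axis j 1) * (-2*p * hardy_P p \<epsilon> C j x)) / (?phi0 * ?phi0)) (at 0)"
    by (rule DERIV_divide[OF DERIV_cmult[OF dP] dphi phi])
  moreover have "(2*p * hardy_dP p \<epsilon> C j x * ?phi0
        - 2*p * hardy_P p \<epsilon> C j (x + 0 *\<^sub>R axis j 1) * (-2*p * hardy_P p \<epsilon> C j x)) / (?phi0 * ?phi0)
      = hardy_dF p \<epsilon> C j x"
    using phi unfolding hardy_dF_def hardy_F_def by (simp add: field_simps power2_eq_square)
  ultimately show ?thesis
    unfolding hardy_F_def by simp
qed

lemma continuous_on_hardy:
  assumes "\<epsilon> > 0" "finite C" "C \<noteq> {}"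
  shows "continuous_on UNIV (hardy_F p \<epsilon> C j)" "continuous_on UNIV (hardy_dF p \<epsilon> C j)"
    "continuous_on UNIV (hardy_K p \<epsilon> C)" "continuous_on UNIV (hardy_G p \<epsilon> C)"
proof -
  have sq: "continuous_on UNIV (\<lambda>x. reg_sqdist \<epsilon> c x powr q)" for c q
    using assms(1) unfolding reg_sqdist_def
    by (intro continuous_intros) (auto simp: add_nonneg_eq_0_iff)
  have phi: "continuous_on UNIV (hardy_phi p \<epsilon> C)" "\<forall>x\<in>UNIV. hardy_phi p \<epsilon> C x \<noteq> 0"
    unfolding hardy_phi_def using hardy_phi_pos[OF assms, of p]
    by (auto intro!: continuous_intros sq simp: hardy_phi_def less_imp_neq[symmetric])
  have P: "continuous_on UNIV (hardy_P p \<epsilon> C j)" "continuous_on UNIV (hardy_dP p \<epsilon> C j)" for j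
    unfolding hardy_P_def hardy_dP_def by (intro continuous_intros sq)+
  show F: "continuous_on UNIV (hardy_F p \<epsilon> C j)" for j
    unfolding hardy_F_def by (intro continuous_intros P phi)
  show "continuous_on UNIV (hardy_dF p \<epsilon> C j)"
    unfolding hardy_dF_def by (intro continuous_intros P phi F)
  show "continuous_on UNIV (hardy_K p \<epsilon> C)"
    unfolding hardy_K_def by (intro continuous_intros P phi)
  show "continuous_on UNIV (hardy_G p \<epsilon> C)"
    unfolding hardy_G_def by (intro continuous_intros sq phi)
qed

lemma hardy_G_nonneg: "\<epsilon> \<ge> 0 \<Longrightarrow> hardy_G p \<epsilon> C x \<ge> 0"
  unfolding hardy_G_def hardy_phi_def by (intro divide_nonneg_nonneg sum_nonneg) auto

lemma hardy_K_ge_G: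
  fixes x :: "real^'n::finite"
  assumes e: "\<epsilon> > 0" and C: "finite C" "C \<noteq> {}" and p: "p \<ge> 0"
  shows "2*p*(real CARD('n) - 2*p - 2) * hardy_G p \<epsilon> C x \<le> hardy_K p \<epsilon> C x"
proof -
  have "(real CARD('n) - 2*p - 2) * reg_sqdist \<epsilon> c x powr (-p-1) \<le>
      (\<Sum>j\<in>UNIV. reg_sqdist \<epsilon> c x powr (-p-1) - 2*(p+1) * reg_sqdist \<epsilon> c x powr (-p-2) * (x$j - c$j)^2)"
    for c
  proof -
    have s: "reg_sqdist \<epsilon> c x > 0"
      using reg_sqdist_pos[OF e] .
    have "reg_sqdist \<epsilon> c x powr (-p-2) * (norm (x - c))^2 \<le> reg_sqdist \<epsilon> c x powr (-p-2) * reg_sqdist \<epsilon> c x"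
      using e by (intro mult_left_mono) (auto simp: reg_sqdist_def)
    also have "\<dots> = reg_sqdist \<epsilon> c x powr (-p-2) * reg_sqdist \<epsilon> c x powr 1"
      using s by simp
    also have "\<dots> = reg_sqdist \<epsilon> c x powr ((-p-2) + 1)"
      by (rule powr_add[symmetric])
    also have "\<dots> = reg_sqdist \<epsilon> c x powr (-p-1)"
      by (rule arg_cong[where f="\<lambda>a. reg_sqdist \<epsilon> c x powr a"]) simp
    finally have "2*(p+1) * (reg_sqdist \<epsilon> c x powr (-p-2) * (norm (x - c))^2) \<le> 2*(p+1) * reg_sqdist \<epsilon> c x powr (-p-1)"
      using p by (intro mult_left_mono) auto
    then have "(real CARD('n) - 2*p - 2) * reg_sqdist \<epsilon> c x powr (-p-1) \<le>
        real CARD('n) * reg_sqdist \<epsilon> c x powr (-p-1) - 2*(p+1) * reg_sqdist \<epsilon> c x powr (-p-2) * (norm (x - c))^2"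
      by (simp add: algebra_simps)
    also have "\<dots> = (\<Sum>j\<in>UNIV. reg_sqdist \<epsilon> c x powr (-p-1)
        - 2*(p+1) * reg_sqdist \<epsilon> c x powr (-p-2) * (x$j - c$j)^2)"
      by (simp add: sum_subtractf sum_distrib_left[symmetric] norm_vec_sq)
    finally show ?thesis .
  qed
  then have "(real CARD('n) - 2*p - 2) * (\<Sum>c\<in>C. reg_sqdist \<epsilon> c x powr (-p-1)) \<le>
      (\<Sum>c\<in>C. \<Sum>j\<in>UNIV. reg_sqdist \<epsilon> c x powr (-p-1)
        - 2*(p+1) * reg_sqdist \<epsilon> c x powr (-p-2) * (x$j - c$j)^2)"
    by (simp add: sum_distrib_left sum_mono)
  also have "\<dots> = (\<Sum>j\<in>UNIV. hardy_dP p \<epsilon> C j x)"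
    unfolding hardy_dP_def by (rule sum.swap)
  finally have "2*p * ((real CARD('n) - 2*p - 2) * (\<Sum>c\<in>C. reg_sqdist \<epsilon> c x powr (-p-1))) / hardy_phi p \<epsilon> C x
      \<le> 2*p * (\<Sum>j\<in>UNIV. hardy_dP p \<epsilon> C j x) / hardy_phi p \<epsilon> C x"
    using less_imp_le[OF hardy_phi_pos[OF e C]] p by (intro divide_right_mono mult_left_mono) auto
  then show ?thesis
    unfolding hardy_K_def hardy_G_def by (simp add: mult.assoc)
qed

lemma hardy_ground_state_identity:
  "hardy_K p \<epsilon> C x * (u x)^2 + (\<Sum>j\<in>UNIV. (partial_deriv j u x + hardy_F p \<epsilon> C j x * u x)^2)
    = (norm (grad u x))^2 + (\<Sum>j\<in>UNIV. hardy_dF p \<epsilon> C j x * (u x)^2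
        + hardy_F p \<epsilon> C j x * (2 * u x * partial_deriv j u x))"
proof -
  have "hardy_K p \<epsilon> C x = (\<Sum>j\<in>UNIV. hardy_dF p \<epsilon> C j x - (hardy_F p \<epsilon> C j x)^2)"
    unfolding hardy_K_def hardy_dF_def by (simp add: sum_divide_distrib sum_distrib_left)
  then have "hardy_K p \<epsilon> C x * (u x)^2 + (\<Sum>j\<in>UNIV. (partial_deriv j u x + hardy_F p \<epsilon> C j x * u x)^2)
      = (\<Sum>j\<in>UNIV. (hardy_dF p \<epsilon> C j x - (hardy_F p \<epsilon> C j x)^2) * (u x)^2
          + (partial_deriv j u x + hardy_F p \<epsilon> C j x * u x)^2)"
    by (simp add: sum_distrib_right sum.distrib)
  also have "\<dots> = (\<Sum>j\<in>UNIV. (partial_deriv j u x)^2 + (hardy_dF p \<epsilon> C j x * (u x)^2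
      + hardy_F p \<epsilon> C j x * (2 * u x * partial_deriv j u x)))"
    by (intro sum.cong refl) (simp add: power2_eq_square algebra_simps)
  finally show ?thesis
    by (simp add: norm_grad_sq sum.distrib)
qed

lemma integral_hardy_divergence_eq_0:
  fixes u :: "real^'n::finite \<Rightarrow> real" and p :: real and j :: 'n
  assumes u: "smooth_compact_support u" and e: "\<epsilon> > 0" and C: "finite C" "C \<noteq> {}"
  defines "h' \<equiv> \<lambda>x. hardy_dF p \<epsilon> C j x * (u x)^2 + hardy_F p \<epsilon> C j x * (2 * u x * partial_deriv j u x)"
  shows "integrable lebesgue h'" "(LINT x|lebesgue. h' x) = 0"
proof -
  note U = smooth_compact_supportD[OF u]
  obtain S where S: "compact S"
    and zero: "\<And>x. x \<notin> S \<Longrightarrow> u x = 0" "\<And>x i. x \<notin> S \<Longrightarrow> partial_deriv i u x = 0"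
    using smooth_compact_supportE[OF u] by blast
  have cont: "continuous_on UNIV h'"
    unfolding h'_def
    by (intro continuous_on_add continuous_on_mult continuous_on_power continuous_on_const
        continuous_on_hardy e C U)
  show "integrable lebesgue h'"
    by (rule integrable_continuous_compact_support[OF cont S]) (simp add: h'_def zero)
  show "(LINT x|lebesgue. h' x) = 0"
  proof (rule integral_line_derivative_eq_0[OF _ cont S])
    show "continuous_on UNIV (\<lambda>x. hardy_F p \<epsilon> C j x * (u x)^2)"
      by (intro continuous_on_mult continuous_on_power continuous_on_hardy e C U)
    fix x
    have "((\<lambda>t. (u (x + t *\<^sub>R axis j 1))^2) has_real_derivative 2 * u x * partial_deriv j u x) (at 0)"
      using DERIV_power[OF partial_deriv_has_real_derivative[OF U(2)], of x j 2] by (simp add: mult_ac)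
    from DERIV_mult[OF hardy_F_has_real_derivative[OF e C, of p j x] this]
    show "((\<lambda>t. hardy_F p \<epsilon> C j (x + t *\<^sub>R axis j 1) * (u (x + t *\<^sub>R axis j 1))^2)
        has_real_derivative h' x) (at 0)"
      by (simp add: h'_def mult_ac)
  qed (simp_all add: h'_def zero)
qed

lemma hardy_inequality_regularized:
  fixes u :: "real^'n::finite \<Rightarrow> real"
  assumes u: "smooth_compact_support u" and e: "\<epsilon> > 0" and C: "finite C" "C \<noteq> {}"
  shows "integrable lebesgue (\<lambda>x. hardy_K p \<epsilon> C x * (u x)^2)"
    and "integrable lebesgue (\<lambda>x. (norm (grad u x))^2)"
    and "(LINT x|lebesgue. hardy_K p \<epsilon> C x * (u x)^2) \<le> (LINT x|lebesgue. (norm (grad u x))^2)"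
proof -
  note U = smooth_compact_supportD[OF u]
  obtain S where S: "compact S"
    and zero: "\<And>x. x \<notin> S \<Longrightarrow> u x = 0" "\<And>x i. x \<notin> S \<Longrightarrow> partial_deriv i u x = 0"
    using smooth_compact_supportE[OF u] by blast
  define h' where "h' j x = hardy_dF p \<epsilon> C j x * (u x)^2
    + hardy_F p \<epsilon> C j x * (2 * u x * partial_deriv j u x)" for j x
  note div = integral_hardy_divergence_eq_0[OF u e C, of p, folded h'_def]
  show iK: "integrable lebesgue (\<lambda>x. hardy_K p \<epsilon> C x * (u x)^2)"
    by (rule integrable_continuous_compact_support[OF _ S])
      (auto intro!: continuous_on_mult continuous_on_power continuous_on_hardy e C U simp: zero)
  show ig: "integrable lebesgue (\<lambda>x. (norm (grad u x))^2)"
    unfolding norm_grad_sq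
    by (rule integrable_continuous_compact_support[OF _ S])
      (auto intro!: continuous_on_sum continuous_on_power U simp: zero)
  have "hardy_K p \<epsilon> C x * (u x)^2 \<le> (norm (grad u x))^2 + (\<Sum>j\<in>UNIV. h' j x)" for x
    using hardy_ground_state_identity[of p \<epsilon> C x u]
      sum_nonneg[of UNIV "\<lambda>j. (partial_deriv j u x + hardy_F p \<epsilon> C j x * u x)^2"]
    unfolding h'_def by simp
  then have "(LINT x|lebesgue. hardy_K p \<epsilon> C x * (u x)^2)
      \<le> (LINT x|lebesgue. (norm (grad u x))^2 + (\<Sum>j\<in>UNIV. h' j x))"
    using iK ig div(1) by (intro integral_mono) auto
  also have "\<dots> = (LINT x|lebesgue. (norm (grad u x))^2)"
    using ig div by simp
  finally show "(LINT x|lebesgue. hardy_K p \<epsilon> C x * (u x)^2) \<le> (LINT x|lebesgue. (norm (grad u x))^2)" .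
qed

lemma hardy_G_tendsto_0:
  fixes x :: "real^'n::finite"
  assumes C: "finite C" "C \<noteq> {}" "x \<notin> C" and e: "e \<longlonglongrightarrow> 0"
  shows "(\<lambda>n. hardy_G p (e n) C x) \<longlonglongrightarrow> hardy_G p 0 C x"
proof -
  have pos: "c \<in> C \<Longrightarrow> reg_sqdist 0 c x > 0" for c
    using C unfolding reg_sqdist_def by auto
  then have nz: "c \<in> C \<Longrightarrow> reg_sqdist 0 c x \<noteq> 0" for c
    by (metis less_irrefl)
  have "(\<lambda>n. reg_sqdist (e n) c x) \<longlonglongrightarrow> reg_sqdist 0 c x" for c
    unfolding reg_sqdist_def using e by (intro tendsto_intros) auto
  moreover have "hardy_phi p 0 C x \<noteq> 0"
    unfolding hardy_phi_def using C pos by (subst sum_nonneg_eq_0_iff) auto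
  ultimately show ?thesis
    unfolding hardy_G_def hardy_phi_def
    by (intro tendsto_divide tendsto_sum tendsto_powr) (auto simp: hardy_phi_def nz)
qed

lemma hardy_nn_inequality_regularized:
  fixes u :: "real^'n::finite \<Rightarrow> real"
  assumes u: "smooth_compact_support u" and e: "\<epsilon> > 0" and C: "finite C" "C \<noteq> {}" and p: "p \<ge> 0"
    and m: "m = 2*p*(real CARD('n) - 2*p - 2)" "m \<ge> 0"
  shows "(\<integral>\<^sup>+x. ennreal (m * hardy_G p \<epsilon> C x * (u x)^2) \<partial>lebesgue)
           \<le> ennreal (LINT x|lebesgue. (norm (grad u x))^2)"
proof -
  note H = hardy_inequality_regularized[OF u e C]
  have K: "0 \<le> m * hardy_G p \<epsilon> C x" "m * hardy_G p \<epsilon> C x \<le> hardy_K p \<epsilon> C x" for x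
    using hardy_K_ge_G[OF e C p, of x] hardy_G_nonneg[of \<epsilon> p C x] e m by auto
  then have "(\<integral>\<^sup>+x. ennreal (m * hardy_G p \<epsilon> C x * (u x)^2) \<partial>lebesgue)
      \<le> (\<integral>\<^sup>+x. ennreal (hardy_K p \<epsilon> C x * (u x)^2) \<partial>lebesgue)"
    by (intro nn_integral_mono ennreal_leI mult_right_mono) auto
  also have "\<dots> = ennreal (LINT x|lebesgue. hardy_K p \<epsilon> C x * (u x)^2)"
    using K by (intro nn_integral_eq_integral H(1) AE_I2) (meson order_trans zero_le_mult_iff zero_le_power2)
  also have "\<dots> \<le> ennreal (LINT x|lebesgue. (norm (grad u x))^2)"
    using H(3) by (rule ennreal_leI)
  finally show ?thesis .
qed

lemma hardy_inequality_multipolar: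
  fixes u :: "real^'n::finite \<Rightarrow> real"
  assumes u: "smooth_compact_support u" and C: "finite C" "C \<noteq> {}" and p: "p \<ge> 0"
    and m: "m = 2*p*(real CARD('n) - 2*p - 2)" "m \<ge> 0"
  shows "(\<integral>\<^sup>+x. ennreal (m * hardy_G p 0 C x * (u x)^2) \<partial>lebesgue)
           \<le> ennreal (LINT x|lebesgue. (norm (grad u x))^2)"
proof -
  define e where "e n = 1 / real (Suc n)" for n
  have e: "e n > 0" for n
    by (simp add: e_def)
  define f where "f n x = ennreal (m * hardy_G p (e n) C x * (u x)^2)" for n x
  have f_meas: "f n \<in> borel_measurable lebesgue" for n
  proof -
    have "continuous_on UNIV (\<lambda>x. m * hardy_G p (e n) C x * (u x)^2)"
      by (intro continuous_on_mult continuous_on_power continuous_on_const continuous_on_hardy e C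
          smooth_compact_supportD u)
    then show ?thesis
      unfolding f_def
      by (intro measurable_compose[OF _ measurable_ennreal])
        (simp add: borel_measurable_continuous_onI measurable_completion)
  qed
  have "AE x in lebesgue. x \<notin> C"
    by (rule AE_completion[OF AE_not_in[OF finite_imp_null_set_lborel[OF C(1)]]])
  then have "AE x in lebesgue. ennreal (m * hardy_G p 0 C x * (u x)^2) = liminf (\<lambda>n. f n x)"
  proof (rule AE_mp, intro AE_I2 impI)
    fix x :: "real^'n"
    assume "x \<notin> C"
    have "e \<longlonglongrightarrow> 0"
      unfolding e_def by (rule LIMSEQ_Suc[OF lim_const_over_n])
    then have "(\<lambda>n. f n x) \<longlonglongrightarrow> ennreal (m * hardy_G p 0 C x * (u x)^2)"
      unfolding f_def using C \<open>x \<notin> C\<close> by (intro tendsto_ennrealI tendsto_intros hardy_G_tendsto_0)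
    then show "ennreal (m * hardy_G p 0 C x * (u x)^2) = liminf (\<lambda>n. f n x)"
      by (simp add: lim_imp_Liminf)
  qed
  then have "(\<integral>\<^sup>+x. ennreal (m * hardy_G p 0 C x * (u x)^2) \<partial>lebesgue) = (\<integral>\<^sup>+x. liminf (\<lambda>n. f n x) \<partial>lebesgue)"
    by (rule nn_integral_cong_AE)
  also have "\<dots> \<le> liminf (\<lambda>n. integral\<^sup>N lebesgue (f n))"
    by (rule nn_integral_liminf[OF f_meas])
  also have "\<dots> \<le> ennreal (LINT x|lebesgue. (norm (grad u x))^2)"
    unfolding f_def using hardy_nn_inequality_regularized[OF u e C p m] by (intro Liminf_le) auto
  finally show ?thesis .
qed

section \<open>Lower bounds for the Hardy weight\<close>

lemma hardy_G_0_eq: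
  "hardy_G p 0 C x = (\<Sum>c\<in>C. ((norm (x - c))^2) powr (-p-1)) / (\<Sum>c\<in>C. ((norm (x - c))^2) powr (-p))"
  unfolding hardy_G_def hardy_phi_def reg_sqdist_def by simp

lemma powr_minus_succ: "(s::real) > 0 \<Longrightarrow> s powr (-p-1) = 1 / (s * s powr p)"
  using powr_minus_divide[of s "p + 1"] by (simp add: powr_add mult.commute)

lemma hardy_G_near_center:
  fixes x a :: "real^'n::finite"
  assumes C: "finite C" "a \<in> C" and p: "p > 0" and \<eta>: "\<eta> \<ge> 0" and \<delta>: "\<delta> > 0"
    and sep: "\<And>c. c \<in> C \<Longrightarrow> c \<noteq> a \<Longrightarrow> \<delta> \<le> (norm (x - c))^2"
    and x: "x \<noteq> a" "norm (x - a) < \<rho>"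
    and \<rho>: "real (card C) * \<delta> powr (-p) \<le> \<eta> * (\<rho>^2) powr (-p)"
  shows "1 / ((1+\<eta>) * (norm (x - a))^2) \<le> hardy_G p 0 C x"
proof -
  define s where "s = (norm (x - a))^2"
  have s: "s > 0" "s \<le> \<rho>^2"
    unfolding s_def using x by (auto intro: power_mono)
  have pos: "0 < ((norm (x - c))^2) powr (-p)" if "c \<in> C" for c
    using sep[OF that] \<delta> x(1) by (cases "c = a") auto
  have num: "s powr (-p-1) \<le> (\<Sum>c\<in>C. ((norm (x - c))^2) powr (-p-1))"
    using member_le_sum[of a C "\<lambda>c. ((norm (x - c))^2) powr (-p-1)"] C unfolding s_def by simp
  have "(\<Sum>c\<in>C - {a}. ((norm (x - c))^2) powr (-p)) \<le> (\<Sum>c\<in>C - {a}. \<delta> powr (-p))"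
    using sep \<delta> p by (intro sum_mono powr_mono2') auto
  also have "\<dots> \<le> real (card C) * \<delta> powr (-p)"
    using C by (auto intro: mult_right_mono simp: card_Diff1_le)
  also have "\<dots> \<le> \<eta> * s powr (-p)"
    using \<rho> \<eta> s p by (smt (verit) mult_left_mono powr_mono2')
  finally have den: "(\<Sum>c\<in>C. ((norm (x - c))^2) powr (-p)) \<le> (1+\<eta>) * s powr (-p)"
    using sum.remove[OF C, of "\<lambda>c. ((norm (x - c))^2) powr (-p)"] unfolding s_def
    by (simp add: algebra_simps)
  have "1 / ((1+\<eta>) * s) = s powr (-p-1) / ((1+\<eta>) * s powr (-p))"
    using s \<eta> by (simp add: powr_minus_succ powr_minus_divide field_simps)
  also have "\<dots> \<le> (\<Sum>c\<in>C. ((norm (x - c))^2) powr (-p-1)) / (\<Sum>c\<in>C. ((norm (x - c))^2) powr (-p))"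
    using num den s C pos by (intro frac_le sum_nonneg sum_pos) auto
  finally show ?thesis
    unfolding hardy_G_0_eq s_def .
qed

lemma hardy_G_ge_ratio:
  fixes x :: "real^'n::finite"
  assumes C: "finite C" "C \<noteq> {}" and p: "p \<ge> 0" and b: "b > 0"
    and ab: "\<And>c. c \<in> C \<Longrightarrow> b \<le> (norm (x - c))^2 \<and> (norm (x - c))^2 \<le> a"
  shows "a powr (-p-1) / b powr (-p) \<le> hardy_G p 0 C x"
proof -
  have pos: "c \<in> C \<Longrightarrow> 0 < (norm (x - c))^2" for c
    using ab[of c] b by linarith
  have "a > 0"
    using C ab b by fastforce
  have "real (card C) * a powr (-p-1) \<le> (\<Sum>c\<in>C. ((norm (x - c))^2) powr (-p-1))"
    using sum_mono[of C "\<lambda>_. a powr (-p-1)" "\<lambda>c. ((norm (x - c))^2) powr (-p-1)"] ab pos p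
    by (simp add: powr_mono2')
  moreover have "(\<Sum>c\<in>C. ((norm (x - c))^2) powr (-p)) \<le> real (card C) * b powr (-p)"
    using sum_mono[of C "\<lambda>c. ((norm (x - c))^2) powr (-p)" "\<lambda>_. b powr (-p)"] ab b p
    by (simp add: powr_mono2')
  moreover have card: "real (card C) > 0"
    using C by (simp add: card_gt_0_iff)
  moreover have "0 < (\<Sum>c\<in>C. ((norm (x - c))^2) powr (-p))"
    using C pos by (intro sum_pos) auto
  ultimately have "(real (card C) * a powr (-p-1)) / (real (card C) * b powr (-p)) \<le> hardy_G p 0 C x"
    unfolding hardy_G_0_eq using \<open>a > 0\<close> by (intro frac_le sum_nonneg) auto
  then show ?thesis
    using card by simp
qed

lemma far_ratio_bound:
  fixes y D K p \<eta> :: real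
  assumes D: "0 \<le> D" "D < y" and K: "K > 1" "K * D \<le> y"
    "((K+1)/K)^2 * (((K+1)/(K-1))^2) powr p \<le> 1 + \<eta>" and p: "p \<ge> 0" and \<eta>: "\<eta> \<ge> 0"
  shows "1 / ((1+\<eta>) * y^2) \<le> ((y + D)^2) powr (-p-1) / ((y - D)^2) powr (-p)"
proof -
  define a where "a = (y + D)^2"
  define b where "b = (y - D)^2"
  have ab: "a > 0" "b > 0"
    unfolding a_def b_def using D by auto
  have "(y + D) * (K - 1) \<le> (K + 1) * (y - D)"
    using K by (simp add: algebra_simps)
  then have "(y + D) / (y - D) \<le> (K+1)/(K-1)"
    using D K by (simp add: field_simps)
  then have "((y + D) / (y - D))^2 \<le> ((K+1)/(K-1))^2"
    using D by (intro power_mono) auto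
  then have ratio: "a / b \<le> ((K+1)/(K-1))^2"
    unfolding a_def b_def by (simp add: power_divide)
  have "y + D \<le> (K+1)/K * y"
    using K by (simp add: field_simps)
  then have "(y + D)^2 \<le> ((K+1)/K * y)^2"
    using D by (intro power_mono) auto
  then have size: "a \<le> ((K+1)/K)^2 * y^2"
    unfolding a_def by (simp only: power_mult_distrib)
  have "a * (a / b) powr p \<le> (((K+1)/K)^2 * y^2) * (((K+1)/(K-1))^2) powr p"
    using ratio size ab p by (intro mult_mono powr_mono2) auto
  also have "\<dots> = (((K+1)/K)^2 * (((K+1)/(K-1))^2) powr p) * y^2"
    by simp
  also have "\<dots> \<le> (1 + \<eta>) * y^2"
    using K by (intro mult_right_mono) auto
  finally have "1 / ((1 + \<eta>) * y^2) \<le> 1 / (a * (a / b) powr p)"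
    using ab \<eta> D by (intro divide_left_mono mult_pos_pos) auto
  also have "\<dots> = a powr (-p-1) / b powr (-p)"
    using ab by (simp add: powr_minus_succ powr_minus_divide powr_divide field_simps)
  finally show ?thesis
    unfolding a_def b_def .
qed

lemma hardy_G_far:
  fixes x :: "real^'n::finite"
  assumes C: "finite C" "C \<noteq> {}" and p: "p \<ge> 0" and \<eta>: "\<eta> \<ge> 0"
    and D: "\<And>c. c \<in> C \<Longrightarrow> norm c \<le> D" "D \<ge> 0"
    and K: "K > 1" "((K+1)/K)^2 * (((K+1)/(K-1))^2) powr p \<le> 1 + \<eta>"
    and x: "x \<noteq> 0" "K * D \<le> norm x"
  shows "1 / ((1+\<eta>) * (norm x)^2) \<le> hardy_G p 0 C x"
proof -
  have "D < norm x"
  proof (cases "D = 0")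
    case False
    then have "1 * D < K * D"
      using K(1) D(2) by (intro mult_strict_right_mono) auto
    then show ?thesis
      using x(2) by simp
  qed (use x(1) in simp)
  then have pos: "0 < (norm x - D)^2"
    by simp
  have "(norm x - D)^2 \<le> (norm (x - c))^2 \<and> (norm (x - c))^2 \<le> (norm x + D)^2" if "c \<in> C" for c
    using D(1)[OF that] \<open>D < norm x\<close> norm_triangle_ineq2[of x c] norm_triangle_ineq4[of x c]
    by (intro conjI power_mono) auto
  from hardy_G_ge_ratio[OF C p pos this]
  have "((norm x + D)^2) powr (-p-1) / ((norm x - D)^2) powr (-p) \<le> hardy_G p 0 C x" .
  moreover have "1 / ((1+\<eta>) * (norm x)^2) \<le> ((norm x + D)^2) powr (-p-1) / ((norm x - D)^2) powr (-p)"
    using far_ratio_bound[OF D(2) \<open>D < norm x\<close> K(1) x(2) K(2) p \<eta>] .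
  ultimately show ?thesis
    by linarith
qed

lemma exists_far_ratio:
  fixes p \<eta> :: real
  assumes "\<eta> > 0"
  obtains K where "K > 1" "((K+1)/K)^2 * (((K+1)/(K-1))^2) powr p \<le> 1 + \<eta>"
proof -
  have "((\<lambda>K::real. (K+1)/K) \<longlongrightarrow> 1) at_top" "((\<lambda>K::real. (K+1)/(K-1)) \<longlongrightarrow> 1) at_top"
    by real_asymp+
  then have "((\<lambda>K::real. ((K+1)/K)^2 * (((K+1)/(K-1))^2) powr p) \<longlongrightarrow> 1^2 * (1^2) powr p) at_top"
    by (intro tendsto_intros) auto
  then have "eventually (\<lambda>K::real. ((K+1)/K)^2 * (((K+1)/(K-1))^2) powr p < 1 + \<eta>) at_top"
    using assms by (intro order_tendstoD) auto
  moreover have "eventually (\<lambda>K::real. K > 1) at_top"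
    by (rule eventually_gt_at_top)
  ultimately have "eventually (\<lambda>K::real. K > 1 \<and> ((K+1)/K)^2 * (((K+1)/(K-1))^2) powr p < 1 + \<eta>) at_top"
    by eventually_elim auto
  from eventually_happens'[OF trivial_limit_at_top_linorder this] that show ?thesis
    by (auto intro: less_imp_le)
qed

lemma exists_near_radius:
  fixes p \<eta> \<delta> c :: real
  assumes "p > 0" "\<eta> > 0" "\<delta> > 0"
  obtains \<rho> where "\<rho> > 0" "\<rho> \<le> \<delta>" "c \<le> \<eta> * (\<rho>^2) powr (-p)"
proof -
  have "filterlim (\<lambda>\<rho>::real. (\<rho>^2) powr (-p)) at_top (at_right 0)"
    using assms(1) by real_asymp
  then have "eventually (\<lambda>\<rho>. c / \<eta> \<le> (\<rho>^2) powr (-p)) (at_right 0)"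
    by (simp add: filterlim_at_top)
  moreover have "eventually (\<lambda>\<rho>::real. 0 < \<rho> \<and> \<rho> < \<delta>) (at_right 0)"
    using assms(3) by (auto simp: eventually_at_right_field)
  ultimately have "eventually (\<lambda>\<rho>::real. 0 < \<rho> \<and> \<rho> < \<delta> \<and> c / \<eta> \<le> (\<rho>^2) powr (-p)) (at_right 0)"
    by eventually_elim auto
  from eventually_happens'[OF trivial_limit_at_right_real this] that show ?thesis
    using assms(2) by (auto simp: divide_le_eq mult.commute)
qed

lemma finite_set_separated:
  fixes C :: "'a::metric_space set"
  assumes "finite C"
  obtains d where "d > 0" "\<And>c c'. c \<in> C \<Longrightarrow> c' \<in> C \<Longrightarrow> c \<noteq> c' \<Longrightarrow> d \<le> dist c c'"
proof -
  define S where "S = insert 1 ((\<lambda>(c, c'). dist c c') ` {z \<in> C \<times> C. fst z \<noteq> snd z})"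
  have S: "finite S"
    unfolding S_def using assms by auto
  show ?thesis
  proof (rule that[of "Min S"])
    show "Min S > 0"
      using S by (subst Min_gr_iff) (auto simp: S_def)
    show "Min S \<le> dist c c'" if "c \<in> C" "c' \<in> C" "c \<noteq> c'" for c c'
      using S that by (intro Min_le) (force simp: S_def)+
  qed
qed

lemma hardy_G_lower_bounds:
  fixes C :: "(real^'n::finite) set"
  assumes C: "finite C" "C \<noteq> {}" and p: "p > 0" and \<kappa>: "0 < \<kappa>" "\<kappa> < 1"
  obtains \<rho> R where "\<rho> > 0"
    "\<And>a b. a \<in> C \<Longrightarrow> b \<in> C \<Longrightarrow> a \<noteq> b \<Longrightarrow> 2 * \<rho> \<le> dist a b"
    "\<And>a. a \<in> C \<Longrightarrow> norm a + \<rho> \<le> R"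
    "\<And>a x. a \<in> C \<Longrightarrow> x \<noteq> a \<Longrightarrow> norm (x - a) < \<rho> \<Longrightarrow> \<kappa> / (norm (x - a))^2 \<le> hardy_G p 0 C x"
    "\<And>x. R \<le> norm x \<Longrightarrow> \<kappa> / (norm x)^2 \<le> hardy_G p 0 C x"
proof -
  define \<eta> where "\<eta> = 1 / \<kappa> - 1"
  have \<eta>: "\<eta> > 0" and \<kappa>_eq: "\<kappa> / s = 1 / ((1 + \<eta>) * s)" for s :: real
    using \<kappa> by (auto simp: \<eta>_def field_simps)
  obtain d where d: "d > 0" and sep: "\<And>a b. a \<in> C \<Longrightarrow> b \<in> C \<Longrightarrow> a \<noteq> b \<Longrightarrow> d \<le> dist a b"
    using finite_set_separated[OF C(1)] by blast
  obtain \<rho> where \<rho>: "\<rho> > 0" "\<rho> \<le> d / 2"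
    and small: "real (card C) * ((d/2)^2) powr (-p) \<le> \<eta> * (\<rho>^2) powr (-p)"
    using exists_near_radius[OF p \<eta>, of "d / 2"] d by auto
  define D where "D = Max (norm ` C)"
  have D: "\<And>c. c \<in> C \<Longrightarrow> norm c \<le> D" "D \<ge> 0"
    using C by (auto simp: D_def Max_ge_iff)
  obtain K where K: "K > 1" "((K+1)/K)^2 * (((K+1)/(K-1))^2) powr p \<le> 1 + \<eta>"
    using exists_far_ratio[OF \<eta>] by blast
  have KD: "K * D \<ge> 0"
    using K(1) D(2) by simp
  show ?thesis
  proof (rule that[of \<rho> "K * D + D + \<rho> + 1"])
    show "2 * \<rho> \<le> dist a b" if "a \<in> C" "b \<in> C" "a \<noteq> b" for a b
      using sep[OF that] \<rho> by simp
    show "norm a + \<rho> \<le> K * D + D + \<rho> + 1" if "a \<in> C" for a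
      using D(1)[OF that] KD by linarith
    show "\<kappa> / (norm (x - a))^2 \<le> hardy_G p 0 C x" if x: "a \<in> C" "x \<noteq> a" "norm (x - a) < \<rho>" for a x
    proof -
      have "(d/2)^2 \<le> (norm (x - c))^2" if "c \<in> C" "c \<noteq> a" for c
      proof -
        have "d \<le> dist a x + dist x c"
          using sep[of a c] x(1) that dist_triangle[of a c x] by auto
        then have "d / 2 \<le> norm (x - c)"
          using x(3) \<rho> by (simp add: dist_norm norm_minus_commute)
        then show ?thesis
          using d by (intro power_mono) auto
      qed
      from hardy_G_near_center[OF C(1) x(1) p _ _ this x(2,3) small] show ?thesis
        using \<eta> d by (simp add: \<kappa>_eq)
    qed
    show "\<kappa> / (norm x)^2 \<le> hardy_G p 0 C x" if x: "K * D + D + \<rho> + 1 \<le> norm x" for x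
    proof -
      have "x \<noteq> 0" "K * D \<le> norm x"
        using x D(2) \<rho>(1) KD by auto
      from hardy_G_far[OF C _ _ D K this] show ?thesis
        using \<eta> p by (simp add: \<kappa>_eq)
    qed
  qed (use \<rho> D(2) KD in auto)
qed

section \<open>Positivity of \<open>mu\<close>\<close>

lemma integral_grad_sq_pos:
  fixes u :: "real^'n::finite \<Rightarrow> real"
  assumes u: "smooth_compact_support u" "u \<noteq> (\<lambda>x. 0)" and N: "CARD('n) \<ge> 3"
  shows "(LINT x|lebesgue. (norm (grad u x))^2) > 0"
proof -
  define p where "p = (real CARD('n) - 2) / 4"
  have "real CARD('n) - 2 \<ge> 1"
    using N by simp
  moreover have "2*p*(real CARD('n) - 2*p - 2) = (real CARD('n) - 2)^2 / 4"
    by (simp add: p_def field_simps power2_eq_square)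
  ultimately have p: "p > 0" "2*p*(real CARD('n) - 2*p - 2) > 0"
    by (auto simp: p_def)
  have C: "finite {0::real^'n}" "{0::real^'n} \<noteq> {}"
    by auto
  obtain x0 where x0: "u x0 \<noteq> 0"
    using u(2) by auto
  have K: "hardy_K p 1 {0::real^'n} x > 0" for x
  proof -
    have "0 < hardy_G p 1 {0::real^'n} x"
      unfolding hardy_G_def using hardy_phi_pos[OF zero_less_one C, of p x] reg_sqdist_pos[of 1 0 x] by simp
    then show ?thesis
      using hardy_K_ge_G[OF zero_less_one C, of p x] p by (smt (verit) mult_pos_pos)
  qed
  note H = hardy_inequality_regularized[OF u(1) zero_less_one C]
  have "(LINT x|lebesgue. hardy_K p 1 {0} x * (u x)^2) > 0"
  proof (rule integral_pos_continuous[OF _ H(1)])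
    show "continuous_on UNIV (\<lambda>x. hardy_K p 1 {0} x * (u x)^2)"
      by (intro continuous_on_mult continuous_on_power continuous_on_hardy smooth_compact_supportD u C)
        simp
    show "0 \<le> hardy_K p 1 {0} x * (u x)^2" for x
      using K[of x] by simp
    show "0 < hardy_K p 1 {0} x0 * (u x0)^2"
      using K[of x0] x0 by simp
  qed
  then show ?thesis
    using H(3)[of p] by linarith
qed

lemma integral_le_hardy_weight:
  fixes u V :: "real^'n::finite \<Rightarrow> real"
  assumes u: "smooth_compact_support u" and C: "finite C" "C \<noteq> {}" and p: "p \<ge> 0"
    and m: "m = 2*p*(real CARD('n) - 2*p - 2)" "m \<ge> 0" and \<theta>: "\<theta> \<ge> 0"
    and V: "\<And>x. V x \<le> \<theta> * m * hardy_G p 0 C x"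
  shows "(LINT x|lebesgue. V x * (u x)^2) \<le> \<theta> * (LINT x|lebesgue. (norm (grad u x))^2)"
proof -
  define A where "A = (LINT x|lebesgue. (norm (grad u x))^2)"
  have "(\<lambda>x. m * hardy_G p 0 C x * (u x)^2) \<in> borel_measurable lebesgue"
  proof -
    have "(\<lambda>x. m * hardy_G p 0 C x * (u x)^2) \<in> borel_measurable borel"
      unfolding hardy_G_0_eq
      using borel_measurable_continuous_onI[OF smooth_compact_supportD(1)[OF u]] by measurable
    then show ?thesis
      by (simp add: measurable_completion)
  qed
  \<comment> \<open>\<open>V u\<^sup>2\<close> need not be integrable; its Bochner integral is then 0, and in any case
    it is bounded by the nonnegative integral.\<close>
  have "V x * (u x)^2 \<le> \<theta> * (m * hardy_G p 0 C x * (u x)^2)" for x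
    using mult_right_mono[OF V[of x], of "(u x)^2"] by (simp add: mult_ac)
  then have "(\<integral>\<^sup>+x. ennreal (V x * (u x)^2) \<partial>lebesgue)
      \<le> (\<integral>\<^sup>+x. ennreal \<theta> * ennreal (m * hardy_G p 0 C x * (u x)^2) \<partial>lebesgue)"
    using \<theta> by (intro nn_integral_mono) (simp add: ennreal_mult'[symmetric] ennreal_leI)
  also have "\<dots> = ennreal \<theta> * (\<integral>\<^sup>+x. ennreal (m * hardy_G p 0 C x * (u x)^2) \<partial>lebesgue)"
    by (rule nn_integral_cmult) (rule measurable_compose[OF \<open>_ \<in> borel_measurable lebesgue\<close> measurable_ennreal])
  also have "\<dots> \<le> ennreal (\<theta> * A)"
    unfolding A_def using hardy_inequality_multipolar[OF u C p m] \<theta>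
    by (simp add: ennreal_mult' mult_left_mono)
  finally have "enn2real (\<integral>\<^sup>+x. ennreal (V x * (u x)^2) \<partial>lebesgue) \<le> \<theta> * A"
    using \<theta> by (intro enn2real_leI) (auto simp: A_def)
  then show ?thesis
    using integral_le_enn2real_nn_integral[of lebesgue "\<lambda>x. V x * (u x)^2"] unfolding A_def by linarith
qed

lemma mu_pos_if_le_hardy_weight:
  fixes V :: "real^'n::finite \<Rightarrow> real"
  assumes N: "CARD('n) \<ge> 3" and C: "finite C" "C \<noteq> {}" and \<theta>: "0 \<le> \<theta>" "\<theta> < 1"
    and V: "\<And>x. V x \<le> \<theta> * ((real CARD('n) - 2)^2 / 4) * hardy_G ((real CARD('n) - 2) / 4) 0 C x"
  shows "mu V > 0"
proof -
  define p where "p = (real CARD('n) - 2) / 4"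
  have p: "p \<ge> 0" "(real CARD('n) - 2)^2 / 4 = 2*p*(real CARD('n) - 2*p - 2)"
    using N by (auto simp: p_def field_simps power2_eq_square)
  have "ereal (1 - \<theta>) \<le> mu V"
    unfolding mu_def
  proof (rule INF_greatest)
    fix u :: "real^'n \<Rightarrow> real"
    assume "u \<in> {u. smooth_compact_support u \<and> u \<noteq> (\<lambda>x. 0)}"
    then have u: "smooth_compact_support u" "u \<noteq> (\<lambda>x. 0)"
      by auto
    have "(LINT x|lebesgue. V x * (u x)^2) \<le> \<theta> * (LINT x|lebesgue. (norm (grad u x))^2)"
      using integral_le_hardy_weight[OF u(1) C p(1) p(2) _ \<theta>(1)] V by (simp add: p_def)
    then show "ereal (1 - \<theta>) \<le> ereal (((LINT x|lebesgue. (norm (grad u x))^2) - (LINT x|lebesgue. V x * (u x)^2))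
        / (LINT x|lebesgue. (norm (grad u x))^2))"
      using integral_grad_sq_pos[OF u N] by (simp add: le_divide_eq algebra_simps)
  qed
  then show ?thesis
    using \<theta>(2) by (meson ereal_less(2) less_le_trans diff_gt_0_iff_gt)
qed

section \<open>Truncating the singular part of a potential\<close>

definition singular_potential ::
    "nat \<Rightarrow> (nat \<Rightarrow> real) \<Rightarrow> (nat \<Rightarrow> real^'n::finite) \<Rightarrow> (nat \<Rightarrow> real) \<Rightarrow> real \<Rightarrow> real \<Rightarrow> real^'n \<Rightarrow> real"
  where "singular_potential k lam a r lam_inf R x =
    (\<Sum>i<k. lam i * indicator (ball (a i) (r i)) x / (norm (x - a i))^2)
    + lam_inf * indicator (UNIV - ball 0 R) x / (norm x)^2"

lemma potential_class_iff:
  fixes V :: "real^'n::finite \<Rightarrow> real"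
  shows "V \<in> potential_class \<longleftrightarrow> (\<exists>k lam a r lam_inf R W. (\<forall>i<k. r i > 0) \<and> R > 0 \<and> inj_on a {..<k}
    \<and> (\<forall>i<k. lam i < (real CARD('n) - 2)^2 / 4) \<and> lam_inf < (real CARD('n) - 2)^2 / 4
    \<and> LN2_Linf W \<and> V = (\<lambda>x. singular_potential k lam a r lam_inf R x + W x))"
  unfolding potential_class_def singular_potential_def by (simp add: fun_eq_iff)

lemma singular_potential_in_potential_class:
  fixes a :: "nat \<Rightarrow> real^'n::finite"
  assumes "\<forall>i<k. r i > 0" "R > 0" "inj_on a {..<k}"
    "\<forall>i<k. lam i < (real CARD('n) - 2)^2 / 4" "lam_inf < (real CARD('n) - 2)^2 / 4"
  shows "singular_potential k lam a r lam_inf R \<in> potential_class"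
proof -
  have "LN2_Linf (\<lambda>x::real^'n. 0)"
    unfolding LN2_Linf_def by auto
  then show ?thesis
    unfolding potential_class_iff using assms by (intro exI[of _ "\<lambda>x. 0"] exI) auto
qed

lemma borel_measurable_singular_potential:
  "singular_potential k lam a r lam_inf R \<in> borel_measurable lebesgue"
proof -
  have [measurable]: "ball c e \<in> sets borel" "UNIV - ball c e \<in> sets borel" for c :: "real^'n" and e
    by auto
  have "singular_potential k lam a r lam_inf R \<in> borel_measurable borel"
    unfolding singular_potential_def by measurable
  then show ?thesis
    by (simp add: measurable_completion)
qed

lemma singular_potential_le_weight:
  fixes a :: "nat \<Rightarrow> real^'n::finite" and w :: "real^'n \<Rightarrow> real"
  assumes sep: "\<And>i j. i < k \<Longrightarrow> j < k \<Longrightarrow> i \<noteq> j \<Longrightarrow> 2 * \<rho> \<le> dist (a i) (a j)"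
    and rt: "\<And>i. i < k \<Longrightarrow> rt i \<le> \<rho>" and R: "\<And>i. i < k \<Longrightarrow> norm (a i) + \<rho> \<le> R"
    and lam: "\<And>i. i < k \<Longrightarrow> lam i \<le> M" "lam_inf \<le> M" and w: "\<And>x. 0 \<le> w x"
    and near: "\<And>i x. i < k \<Longrightarrow> x \<noteq> a i \<Longrightarrow> norm (x - a i) < \<rho> \<Longrightarrow> M / (norm (x - a i))^2 \<le> w x"
    and far: "\<And>x. R \<le> norm x \<Longrightarrow> M / (norm x)^2 \<le> w x"
  shows "singular_potential k lam a rt lam_inf R x \<le> w x"
proof (cases "\<exists>i<k. x \<in> ball (a i) (rt i)")
  case True
  then obtain i where i: "i < k" "dist (a i) x < rt i"
    by auto
  then have xi: "norm (x - a i) < \<rho>"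
    using rt[OF i(1)] by (simp add: dist_norm norm_minus_commute)
  have others: "x \<notin> ball (a l) (rt l)" if "l < k" "l \<noteq> i" for l
  proof
    assume "x \<in> ball (a l) (rt l)"
    then have "dist (a i) (a l) < 2 * \<rho>"
      using i rt[OF that(1)] rt[OF i(1)] dist_triangle[of "a i" "a l" x] by (simp add: dist_commute)
    then show False
      using sep[OF i(1) that(1)] that(2) by simp
  qed
  have "norm x < R"
    using R[OF i(1)] xi norm_triangle_ineq2[of x "a i"] by simp
  then have "singular_potential k lam a rt lam_inf R x = lam i / (norm (x - a i))^2"
    unfolding singular_potential_def using i others
    by (simp add: sum.remove[of "{..<k}" i] sum.neutral dist_commute)
  also have "\<dots> \<le> M / (norm (x - a i))^2"
    using lam(1)[OF i(1)] by (simp add: divide_right_mono)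
  also have "\<dots> \<le> w x"
    \<comment> \<open>at the pole itself both quotients are \<open>_ / 0 = 0\<close>\<close>
    using near[OF i(1) _ xi] w[of x] by (cases "x = a i") auto
  finally show ?thesis .
next
  case False
  then have "singular_potential k lam a rt lam_inf R x = lam_inf * indicator (UNIV - ball 0 R) x / (norm x)^2"
    unfolding singular_potential_def by (simp add: sum.neutral)
  also have "\<dots> \<le> w x"
  proof (cases "norm x < R")
    case False
    then have "lam_inf / (norm x)^2 \<le> M / (norm x)^2"
      using lam(2) by (simp add: divide_right_mono)
    then show ?thesis
      using False far[of x] by simp
  qed (simp add: w)
  finally show ?thesis .
qed

lemma singular_potential_le_hardy_G:
  fixes a :: "nat \<Rightarrow> real^'n::finite"
  assumes a: "inj_on a {..<k}" and p: "p > 0" and \<kappa>: "0 < \<kappa>" "\<kappa> < 1"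
    and M: "0 \<le> M" "\<forall>i<k. lam i \<le> M" "lam_inf \<le> M"
  shows "\<exists>\<rho>>0. \<exists>R0. \<forall>rt R x. (\<forall>i<k. rt i \<le> \<rho>) \<longrightarrow> R0 \<le> R \<longrightarrow>
    singular_potential k lam a rt lam_inf R x \<le> M / \<kappa> * hardy_G p 0 (insert 0 (a ` {..<k})) x"
proof -
  define C where "C = insert 0 (a ` {..<k})"
  have C: "finite C" "C \<noteq> {}"
    by (auto simp: C_def)
  obtain \<rho> R0 where \<rho>: "\<rho> > 0"
    and sep: "\<And>b c. b \<in> C \<Longrightarrow> c \<in> C \<Longrightarrow> b \<noteq> c \<Longrightarrow> 2 * \<rho> \<le> dist b c"
    and R0: "\<And>b. b \<in> C \<Longrightarrow> norm b + \<rho> \<le> R0"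
    and near: "\<And>b x. b \<in> C \<Longrightarrow> x \<noteq> b \<Longrightarrow> norm (x - b) < \<rho> \<Longrightarrow> \<kappa> / (norm (x - b))^2 \<le> hardy_G p 0 C x"
    and far: "\<And>x. R0 \<le> norm x \<Longrightarrow> \<kappa> / (norm x)^2 \<le> hardy_G p 0 C x"
    using hardy_G_lower_bounds[OF C p \<kappa>] by blast
  have aC: "i < k \<Longrightarrow> a i \<in> C" for i
    by (simp add: C_def)
  have scale: "M / s \<le> M / \<kappa> * hardy_G p 0 C x" if "\<kappa> / s \<le> hardy_G p 0 C x" for s x
    using mult_left_mono[OF that, of "M / \<kappa>"] M(1) \<kappa>(1) by simp
  show ?thesis
    unfolding C_def[symmetric]
  proof (intro exI conjI allI impI)
    fix rt R x
    assume rt: "\<forall>i<k. rt i \<le> \<rho>" and R: "R0 \<le> R"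
    show "singular_potential k lam a rt lam_inf R x \<le> M / \<kappa> * hardy_G p 0 C x"
    proof (rule singular_potential_le_weight[OF _ rt[rule_format] _ M(2)[rule_format] M(3)])
      show "2 * \<rho> \<le> dist (a i) (a j)" if "i < k" "j < k" "i \<noteq> j" for i j
        using sep[OF aC[OF that(1)] aC[OF that(2)]] inj_onD[OF a] that by auto
      show "norm (a i) + \<rho> \<le> R" if "i < k" for i
        using R0[OF aC[OF that]] R by simp
      show "0 \<le> M / \<kappa> * hardy_G p 0 C x" for x
        using M(1) \<kappa>(1) hardy_G_nonneg[of 0 p C x] by simp
      show "M / (norm (x - a i))^2 \<le> M / \<kappa> * hardy_G p 0 C x"
        if "i < k" "x \<noteq> a i" "norm (x - a i) < \<rho>" for i x
        by (rule scale[OF near[OF aC[OF that(1)] that(2,3)]])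
      show "M / (norm x)^2 \<le> M / \<kappa> * hardy_G p 0 C x" if "R \<le> norm x" for x
        using scale[OF far[of x]] R that by simp
    qed
  qed (rule \<rho>)
qed

lemma mu_singular_potential_pos:
  fixes a :: "nat \<Rightarrow> real^'n::finite"
  assumes N: "CARD('n) \<ge> 3" and a: "inj_on a {..<k}"
    and lam: "\<forall>i<k. lam i < (real CARD('n) - 2)^2 / 4"
    and lam_inf: "lam_inf < (real CARD('n) - 2)^2 / 4"
  shows "\<exists>\<rho>>0. \<exists>R0. \<forall>rt R. (\<forall>i<k. rt i \<le> \<rho>) \<longrightarrow> R0 \<le> R \<longrightarrow>
    mu (singular_potential k lam a rt lam_inf R) > 0"
proof -
  define m where "m = (real CARD('n) - 2)^2 / 4"
  have "real CARD('n) - 2 \<ge> 1"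
    using N by simp
  then have m: "m > 0" and p: "(real CARD('n) - 2) / 4 > 0"
    by (auto simp: m_def)
  define M where "M = max 0 (Max (insert lam_inf (lam ` {..<k})))"
  have "\<And>i. i < k \<Longrightarrow> lam i < m" "lam_inf < m"
    using lam lam_inf by (simp_all add: m_def)
  then have M: "0 \<le> M" "M < m" "\<forall>i<k. lam i \<le> M" "lam_inf \<le> M"
    using m by (auto simp: M_def Max_less_iff le_max_iff_disj Max_ge_iff)
  define \<kappa> where "\<kappa> = (M / m + 1) / 2"
  have "0 \<le> M / m" "M / m < 1"
    using M(1,2) m by auto
  then have \<kappa>: "0 < \<kappa>" "\<kappa> < 1" "M < \<kappa> * m"
    using m by (simp_all add: \<kappa>_def field_simps)
  obtain \<rho> R0 where "\<rho> > 0" and le_G: "\<And>rt R x. \<forall>i<k. rt i \<le> \<rho> \<Longrightarrow> R0 \<le> R \<Longrightarrow>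
      singular_potential k lam a rt lam_inf R x \<le> M / \<kappa> * hardy_G ((real CARD('n) - 2) / 4) 0 (insert 0 (a ` {..<k})) x"
    using singular_potential_le_hardy_G[OF a p \<kappa>(1,2) M(1,3,4)] by blast
  have "mu (singular_potential k lam a rt lam_inf R) > 0" if "\<forall>i<k. rt i \<le> \<rho>" "R0 \<le> R" for rt R
  proof (rule mu_pos_if_le_hardy_weight[OF N, of "insert 0 (a ` {..<k})" "M / (\<kappa> * m)"])
    show "0 \<le> M / (\<kappa> * m)" "M / (\<kappa> * m) < 1"
      using M(1) \<kappa> m by auto
    show "singular_potential k lam a rt lam_inf R x
        \<le> M / (\<kappa> * m) * ((real CARD('n) - 2)^2 / 4) * hardy_G ((real CARD('n) - 2) / 4) 0 (insert 0 (a ` {..<k})) x"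
      for x
      using le_G[OF that] m by (simp add: m_def)
  qed auto
  then show ?thesis
    using \<open>\<rho> > 0\<close> by blast
qed

lemma ball_term_shrink_bound:
  fixes x a :: "real^'n::finite"
  assumes "0 < rt" "rt \<le> r" "norm a + r \<le> M"
  shows "\<bar>lam * (indicator (ball a r) x - indicator (ball a rt) x) / (norm (x - a))^2\<bar>
           \<le> \<bar>lam\<bar> / rt^2 * indicator (cball 0 M) x"
proof (cases "x \<in> ball a r - ball a rt")
  case True
  then have "rt \<le> norm (x - a)" "norm (x - a) < r"
    by (auto simp: dist_norm norm_minus_commute)
  moreover have "norm x \<le> norm a + norm (x - a)"
    using norm_triangle_ineq2[of x a] by simp
  ultimately have "x \<in> cball 0 M" "\<bar>lam\<bar> / (norm (x - a))^2 \<le> \<bar>lam\<bar> / rt^2"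
    using assms by (auto intro!: divide_left_mono power_mono mult_pos_pos)
  then show ?thesis
    using True by (simp add: abs_div)
next
  case False
  then show ?thesis
    using assms(2) by (auto simp: indicator_def)
qed

lemma tail_term_shrink_bound:
  fixes x :: "real^'n::finite"
  assumes "0 < R" "R \<le> R'" "R' \<le> M"
  shows "\<bar>lam * (indicator (UNIV - ball 0 R) x - indicator (UNIV - ball 0 R') x) / (norm x)^2\<bar>
           \<le> \<bar>lam\<bar> / R^2 * indicator (cball 0 M) x"
proof (cases "R \<le> norm x \<and> norm x < R'")
  case True
  then have "x \<in> cball 0 M" "\<bar>lam\<bar> / (norm x)^2 \<le> \<bar>lam\<bar> / R^2"
    using assms by (auto intro!: divide_left_mono power_mono mult_pos_pos)
  then show ?thesis
    using True by (simp add: abs_div)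
next
  case False
  then show ?thesis
    using assms(2) by (auto simp: indicator_def)
qed

lemma singular_potential_shrink_bounded:
  fixes a :: "nat \<Rightarrow> real^'n::finite"
  assumes rt: "\<forall>i<k. 0 < rt i \<and> rt i \<le> r i" and R: "0 < R" "R \<le> R'"
  shows "\<exists>B M. \<forall>x. \<bar>singular_potential k lam a r lam_inf R x - singular_potential k lam a rt lam_inf R' x\<bar>
    \<le> B * indicator (cball 0 M) x"
proof (intro exI allI)
  define M where "M = R' + (\<Sum>i<k. norm (a i) + r i)"
  have nonneg: "0 \<le> norm (a i) + r i" if "i < k" for i
    using rt that norm_ge_zero[of "a i"] by force
  have M: "norm (a i) + r i \<le> M" if "i < k" for i
  proof -
    have "norm (a i) + r i \<le> (\<Sum>i<k. norm (a i) + r i)"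
      using that nonneg by (intro member_le_sum) auto
    then show ?thesis
      unfolding M_def using R by simp
  qed
  have "R' \<le> M"
    unfolding M_def using sum_nonneg[of "{..<k}" "\<lambda>i. norm (a i) + r i"] nonneg by simp
  fix x
  have "\<bar>singular_potential k lam a r lam_inf R x - singular_potential k lam a rt lam_inf R' x\<bar>
      = \<bar>(\<Sum>i<k. lam i * (indicator (ball (a i) (r i)) x - indicator (ball (a i) (rt i)) x) / (norm (x - a i))^2)
        + lam_inf * (indicator (UNIV - ball 0 R) x - indicator (UNIV - ball 0 R') x) / (norm x)^2\<bar>"
    unfolding singular_potential_def
    by (simp add: sum_subtractf right_diff_distrib diff_divide_distrib algebra_simps)
  also have "\<dots> \<le> (\<Sum>i<k. \<bar>lam i * (indicator (ball (a i) (r i)) x - indicator (ball (a i) (rt i)) x)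
        / (norm (x - a i))^2\<bar>) + \<bar>lam_inf\<bar> / R^2 * indicator (cball 0 M) x"
    by (intro order_trans[OF abs_triangle_ineq] add_mono sum_abs tail_term_shrink_bound R \<open>R' \<le> M\<close>)
  also have "\<dots> \<le> (\<Sum>i<k. \<bar>lam i\<bar> / (rt i)^2 * indicator (cball 0 M) x) + \<bar>lam_inf\<bar> / R^2 * indicator (cball 0 M) x"
    using rt M by (intro add_mono sum_mono ball_term_shrink_bound) auto
  also have "\<dots> = ((\<Sum>i<k. \<bar>lam i\<bar> / (rt i)^2) + \<bar>lam_inf\<bar> / R^2) * indicator (cball 0 M) x"
    by (simp add: sum_distrib_right distrib_right)
  finally show "\<bar>singular_potential k lam a r lam_inf R x - singular_potential k lam a rt lam_inf R' x\<bar>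
      \<le> ((\<Sum>i<k. \<bar>lam i\<bar> / (rt i)^2) + \<bar>lam_inf\<bar> / R^2) * indicator (cball 0 M) x" .
qed

lemma powr_add_le:
  fixes a b q :: real
  assumes "a \<ge> 0" "b \<ge> 0" "q > 0"
  shows "(a + b) powr q \<le> 2 powr q * (a powr q + b powr q)"
proof -
  have "(a + b) powr q \<le> (2 * max a b) powr q"
    using assms by (intro powr_mono2) auto
  also have "\<dots> = 2 powr q * max a b powr q"
    using assms by (simp add: powr_mult)
  also have "\<dots> \<le> 2 powr q * (a powr q + b powr q)"
    by (intro mult_left_mono) (auto simp: max_def)
  finally show ?thesis .
qed

lemma LN2_Linf_add_bounded_compact:
  fixes W E :: "real^'n::finite \<Rightarrow> real"
  assumes W: "LN2_Linf W" and E: "E \<in> borel_measurable lebesgue" "\<And>x. \<bar>E x\<bar> \<le> B * indicator (cball 0 M) x"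
  shows "LN2_Linf (\<lambda>x. W x + E x)"
proof -
  define q where "q = real CARD('n) / 2"
  obtain CW where W: "W \<in> borel_measurable lebesgue" "integrable lebesgue (\<lambda>x. \<bar>W x\<bar> powr q)"
    "AE x in lebesgue. \<bar>W x\<bar> \<le> CW"
    using W unfolding LN2_Linf_def q_def by blast
  have bound: "\<bar>E x\<bar> \<le> \<bar>B\<bar> * indicator (cball 0 M) x" for x
    by (meson E(2) abs_ge_self indicator_pos_le mult_right_mono order_trans)
  have meas: "(\<lambda>x. W x + E x) \<in> borel_measurable lebesgue"
    using W(1) E(1) by simp
  have dom: "\<bar>W x + E x\<bar> powr q \<le> 2 powr q * (\<bar>W x\<bar> powr q + \<bar>B\<bar> powr q * indicator (cball 0 M) x)" for x
  proof -
    have "\<bar>W x + E x\<bar> powr q \<le> (\<bar>W x\<bar> + \<bar>B\<bar> * indicator (cball 0 M) x) powr q"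
      using bound[of x] abs_triangle_ineq[of "W x" "E x"] by (intro powr_mono2) (auto simp: q_def)
    also have "\<dots> \<le> 2 powr q * (\<bar>W x\<bar> powr q + (\<bar>B\<bar> * indicator (cball 0 M) x) powr q)"
      by (intro powr_add_le) (auto simp: q_def)
    finally show ?thesis
      by (cases "x \<in> cball 0 M") auto
  qed
  have "integrable lebesgue (\<lambda>x. \<bar>W x + E x\<bar> powr q)"
  proof (rule Bochner_Integration.integrable_bound)
    have "emeasure lebesgue (cball (0::real^'n) M) < \<infinity>"
      using emeasure_bounded_finite[of "cball (0::real^'n) M"] by simp
    then show "integrable lebesgue (\<lambda>x. 2 powr q * (\<bar>W x\<bar> powr q + \<bar>B\<bar> powr q * indicator (cball 0 M) x))"
      by (intro integrable_mult_right Bochner_Integration.integrable_add W(2) integrable_real_indicator) auto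
    show "(\<lambda>x. \<bar>W x + E x\<bar> powr q) \<in> borel_measurable lebesgue"
      using meas by measurable
    show "AE x in lebesgue. norm (\<bar>W x + E x\<bar> powr q)
        \<le> norm (2 powr q * (\<bar>W x\<bar> powr q + \<bar>B\<bar> powr q * indicator (cball 0 M) x))"
      using dom by (intro AE_I2) (simp add: abs_mult)
  qed
  moreover have "AE x in lebesgue. \<bar>W x + E x\<bar> \<le> CW + \<bar>B\<bar>"
    using W(3)
  proof (rule AE_mp, intro AE_I2 impI)
    fix x
    assume "\<bar>W x\<bar> \<le> CW"
    then show "\<bar>W x + E x\<bar> \<le> CW + \<bar>B\<bar>"
      using bound[of x] by (cases "x \<in> cball 0 M") auto
  qed
  ultimately show ?thesis
    unfolding LN2_Linf_def q_def using meas by blast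
qed

theorem lemma1p4:
  fixes V :: "real^'n::finite \<Rightarrow> real"
  assumes "CARD('n) \<ge> 3"
    and "V \<in> potential_class"
  shows "\<exists>Vt Wt. Vt \<in> potential_class \<and> LN2_Linf Wt \<and> mu Vt > 0 \<and> V = (\<lambda>x. Vt x + Wt x)"
proof -
  obtain k lam a r lam_inf R W where r: "\<forall>i<k. r i > 0" and R: "R > 0" and a: "inj_on a {..<k}"
    and lam: "\<forall>i<k. lam i < (real CARD('n) - 2)^2 / 4" and lam_inf: "lam_inf < (real CARD('n) - 2)^2 / 4"
    and W: "LN2_Linf W" and V: "V = (\<lambda>x. singular_potential k lam a r lam_inf R x + W x)"
    using assms(2) unfolding potential_class_iff by blast
  obtain \<rho> R0 where \<rho>: "\<rho> > 0" and mu_pos: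
    "\<And>rt R'. \<forall>i<k. rt i \<le> \<rho> \<Longrightarrow> R0 \<le> R' \<Longrightarrow> mu (singular_potential k lam a rt lam_inf R') > 0"
    using mu_singular_potential_pos[OF assms(1) a lam lam_inf] by blast
  define rt where "rt i = min (r i) \<rho>" for i
  have rt: "\<forall>i<k. 0 < rt i \<and> rt i \<le> r i"
    using r \<rho> by (simp add: rt_def)
  define Vt where "Vt = singular_potential k lam a rt lam_inf (max R R0)"
  obtain B M where "\<And>x. \<bar>singular_potential k lam a r lam_inf R x - Vt x\<bar> \<le> B * indicator (cball 0 M) x"
    using singular_potential_shrink_bounded[OF rt R max.cobounded1] unfolding Vt_def by blast
  then have "LN2_Linf (\<lambda>x. W x + (singular_potential k lam a r lam_inf R x - Vt x))"
    unfolding Vt_def by (intro LN2_Linf_add_bounded_compact[OF W] borel_measurable_diff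
        borel_measurable_singular_potential)
  then have "LN2_Linf (\<lambda>x. V x - Vt x)"
    by (simp add: V algebra_simps)
  moreover have "Vt \<in> potential_class"
    unfolding Vt_def using rt R a lam lam_inf by (intro singular_potential_in_potential_class) auto
  moreover have "mu Vt > 0"
    unfolding Vt_def by (rule mu_pos) (simp_all add: rt_def)
  ultimately show ?thesis
    by (intro exI[of _ Vt] exI[of _ "\<lambda>x. V x - Vt x"]) simp
qed

end
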